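(* If $\kappa\ge1$ and $\phi(R)+\kappa\phi^{(s)}\le\frac\pi2$, then $\mu(\mathcal D^{(s)}(\kappa))=\Theta\big(n(\phi(R)+\kappa\phi^{(s)})\big)=\Theta(1+\kappa s^{1/(2\alpha)})$.
   Context: Fixed constants $\nu>0$, $\alpha\in(\tfrac12,1]$; $R:=2\log(n/\nu)$. Polar coordinates $(r,\theta)$ in the hyperbolic disk $B_O(R)$; $\mu$ is the measure with $d\mu=n\frac{\alpha\sinh(\alpha r)}{2\pi(\cosh(\alpha R)-1)}dr\,d\theta$. $\phi(r)\in[0,\pi/2]$ is defined for $r\in[0,R]$ by $\cos\phi(r)=\coth R\tanh(r/2)$ (decreasing bijection onto $[\phi(R),\pi/2]$). $\phi^{(s)}:=(s^{1/\alpha}/e^R)^{1/2}$, $\varepsilon(\kappa,s):=\frac{1+s}{(1+\kappa s^{1/(2\alpha)})^{2\alpha}}$. For $\phi(R)\le|\theta_0|<\pi/2$, $\mathfrak r_0:=\phi^{-1}(|\theta_0|)$ and $\tilde{\mathfrak r}_0\in[\mathfrak r_0,R]$ is the unique value with $\frac{\log(\tanh(\alpha R/2)/\tanh(\alpha\tilde{\mathfrak r}_0/2))}{\log(\tanh(\alpha R/2)/\tanh(\alpha\mathfrak r_0/2))}=\varepsilon(\kappa,s)$. $\mathcal D^{(s)}(\kappa):=\{(r_0,\theta_0)\in B_O(R):|\theta_0|\le\frac\pi2\text{ and }(|\theta_0|\le\phi(R)+\kappa\phi^{(s)}\text{ or }r_0\le\tilde{\mathfrak r}_0)\}$. $s=s(n)>0$;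 asymptotics as $n\to\infty$. *)

theory Defs
  imports "HOL-Analysis.Analysis" "HOL-Library.Landau_Symbols"
begin

definition hypR :: "real \<Rightarrow> nat \<Rightarrow> real" where
  "hypR \<nu> n = 2 * ln (real n / \<nu>)"

definition phi :: "real \<Rightarrow> real \<Rightarrow> real" where
  "phi R r = arccos ((cosh R / sinh R) * tanh (r / 2))"

definition phi_s :: "real \<Rightarrow> real \<Rightarrow> real \<Rightarrow> real" where
  "phi_s \<alpha> R s = sqrt (s powr (1 / \<alpha>) / exp R)"

definition eps :: "real \<Rightarrow> real \<Rightarrow> real \<Rightarrow> real" where
  "eps \<alpha> \<kappa> s = (1 + s) / (1 + \<kappa> * s powr (1 / (2 * \<alpha>))) powr (2 * \<alpha>)"

definition rr0 :: "real \<Rightarrow> real \<Rightarrow> real" where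
  "rr0 R \<theta> = (THE r. 0 \<le> r \<and> r \<le> R \<and> phi R r = \<bar>\<theta>\<bar>)"

definition rr0_tilde :: "real \<Rightarrow> real \<Rightarrow> real \<Rightarrow> real \<Rightarrow> real \<Rightarrow> real" where
  "rr0_tilde \<alpha> R \<kappa> s \<theta> = (THE r. rr0 R \<theta> \<le> r \<and> r \<le> R \<and>
      ln (tanh (\<alpha> * R / 2) / tanh (\<alpha> * r / 2)) /
      ln (tanh (\<alpha> * R / 2) / tanh (\<alpha> * rr0 R \<theta> / 2)) = eps \<alpha> \<kappa> s)"

text \<open>The disk B_O(R) in polar coordinates (r, theta), theta in (-pi, pi].\<close>
definition polar_disk :: "real \<Rightarrow> (real \<times> real) set" where
  "polar_disk R = {(r, \<theta>). 0 \<le> r \<and> r \<le> R \<and> - pi < \<theta> \<and> \<theta> \<le> pi}"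

definition mu_meas :: "real \<Rightarrow> real \<Rightarrow> nat \<Rightarrow> (real \<times> real) measure" where
  "mu_meas \<nu> \<alpha> n = density lborel (\<lambda>(r, \<theta>).
      if (r, \<theta>) \<in> polar_disk (hypR \<nu> n)
      then ennreal (real n * \<alpha> * sinh (\<alpha> * r) /
                    (2 * pi * (cosh (\<alpha> * hypR \<nu> n) - 1)))
      else 0)"

definition D_s :: "real \<Rightarrow> real \<Rightarrow> nat \<Rightarrow> real \<Rightarrow> real \<Rightarrow> (real \<times> real) set" where
  "D_s \<nu> \<alpha> n \<kappa> s = (let R = hypR \<nu> n in
     {(r, \<theta>) \<in> polar_disk R. \<bar>\<theta>\<bar> \<le> pi / 2 \<and>
        (\<bar>\<theta>\<bar> \<le> phi R R + \<kappa> * phi_s \<alpha> R s \<or>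
         (phi R R \<le> \<bar>\<theta>\<bar> \<and> \<bar>\<theta>\<bar> < pi / 2 \<and> r \<le> rr0_tilde \<alpha> R \<kappa> s \<theta>))})"

end

theory Submission
  imports Defs
begin

text \<open>
  Let \<open>t = \<phi>(R) + \<kappa> \<phi>\<^sup>(\<^sup>s\<^sup>)\<close>. The set splits into the sector
  \<open>|\<theta>| \<le> t\<close>, whose \<open>\<mu>\<close>-measure is exactly \<open>n t / \<pi>\<close>, and the region \<open>t < |\<theta>| < \<pi>/2, r \<le> \<tilde>r\<^sub>0(\<theta>)\<close>.
  The equation defining \<open>\<tilde>r\<^sub>0\<close> has a closed-form solution, and the concavity of
  \<open>\<epsilon> \<mapsto> x powr \<epsilon>\<close> together with \<open>1 - cos \<theta> \<ge> \<theta>^2/4\<close> yields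
  \<open>cosh (\<alpha> \<tilde>r\<^sub>0) - 1 \<le> C |\<theta>| powr (-2\<alpha>) / \<epsilon>\<close>. Integrating \<open>sinh (\<alpha> r)\<close> in \<open>r\<close> and then
  \<open>|\<theta>| powr (-2\<alpha>)\<close> over \<open>|\<theta>| > t\<close>, which converges as \<open>2\<alpha> > 1\<close>, bounds the measure of the
  region by a multiple of \<open>n t powr (1 - 2\<alpha>) exp (-\<alpha> R) / \<epsilon>\<close>. Since
  \<open>1/\<epsilon> \<le> (1 + \<kappa> s powr (1/(2\<alpha>))) powr (2\<alpha>)\<close> and \<open>exp (-R/2) (1 + \<kappa> s powr (1/(2\<alpha>))) \<le> t\<close>,
  this is \<open>O(n t)\<close>. Finally \<open>\<phi>(R)\<close> is within a factor 3 of \<open>exp (-R/2) = \<nu>/n\<close>, so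
  \<open>n t\<close> is within constant factors of \<open>1 + \<kappa> s powr (1/(2\<alpha>))\<close>.
\<close>

lemma cos_ge_one_minus_sq_div_2: "1 - x\<^sup>2 / 2 \<le> cos x" for x :: real
proof -
  have "(\<lambda>t. cos t - 1 + t\<^sup>2 / 2) 0 \<le> (\<lambda>t. cos t - 1 + t\<^sup>2 / 2) \<bar>x\<bar>"
  proof (rule DERIV_nonneg_imp_nondecreasing[of 0])
    fix t :: real assume "0 \<le> t"
    then show "\<exists>y. ((\<lambda>t. cos t - 1 + t\<^sup>2 / 2) has_real_derivative y) (at t) \<and> 0 \<le> y"
      using sin_x_le_x[of t] by (intro exI[of _ "t - sin t"]) (auto intro!: derivative_eq_intros)
  qed simp
  then show ?thesis by simp
qed

lemma sin_ge_cubic: "0 \<le> x \<Longrightarrow> x - x ^ 3 / 6 \<le> sin x" for x :: real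
proof -
  assume "0 \<le> x"
  have "(\<lambda>t. sin t - t + t ^ 3 / 6) 0 \<le> (\<lambda>t. sin t - t + t ^ 3 / 6) x"
  proof (rule DERIV_nonneg_imp_nondecreasing[OF \<open>0 \<le> x\<close>])
    fix t :: real
    show "\<exists>y. ((\<lambda>t. sin t - t + t ^ 3 / 6) has_real_derivative y) (at t) \<and> 0 \<le> y"
      using cos_ge_one_minus_sq_div_2[of t]
      by (intro exI[of _ "cos t - 1 + t\<^sup>2 / 2"]) (auto intro!: derivative_eq_intros)
  qed
  then show ?thesis by simp
qed

lemma one_minus_cos_ge_sq_div_4:
  fixes x :: real assumes "\<bar>x\<bar> \<le> pi / 2" shows "x\<^sup>2 / 4 \<le> 1 - cos x"
proof -
  have "(\<lambda>t. 1 - cos t - t\<^sup>2 / 4) 0 \<le> (\<lambda>t. 1 - cos t - t\<^sup>2 / 4) \<bar>x\<bar>"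
  proof (rule DERIV_nonneg_imp_nondecreasing[of 0])
    fix t assume t: "0 \<le> t" "t \<le> \<bar>x\<bar>"
    have "pi \<le> 3.2" using pi_approx(2) by simp
    then have "t \<le> 1.6" using t assms by linarith
    then have "t\<^sup>2 \<le> 1.6\<^sup>2" using t by (intro power_mono) auto
    then have "t\<^sup>2 \<le> 3" by (simp add: power2_eq_square)
    then have "t ^ 3 / 6 \<le> t / 2"
      using t by (simp add: power3_eq_cube power2_eq_square mult_le_cancel_left)
    then have "0 \<le> sin t - t / 2" using sin_ge_cubic[of t] t by linarith
    then show "\<exists>y. ((\<lambda>t. 1 - cos t - t\<^sup>2 / 4) has_real_derivative y) (at t) \<and> 0 \<le> y"
      by (intro exI[of _ "sin t - t / 2"]) (auto intro!: derivative_eq_intros)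
  qed simp
  then show ?thesis by simp
qed

lemma powr_le_one_minus_mult:
  fixes t e :: real assumes "0 < t" "t \<le> 1" "0 < e" "e \<le> 1"
  shows "t powr e \<le> 1 - e * (1 - t)"
  using Youngs_inequality_0[of e "1 - e" t 1] assms by (simp add: algebra_simps)

lemma one_plus_powr_le_powr_one_plus:
  fixes a p :: real assumes "0 \<le> a" "1 \<le> p"
  shows "1 + a powr p \<le> (1 + a) powr p"
proof (cases "a = 0")
  case False
  have "1 + a * a powr (p - 1) \<le> (1 + a) powr (p - 1) + a * (1 + a) powr (p - 1)"
    using assms by (intro add_mono mult_left_mono powr_mono2 ge_one_powr_ge_zero) auto
  moreover have "(1 + a) powr p = (1 + a) powr (p - 1) + a * (1 + a) powr (p - 1)"
    using assms powr_add[of "1 + a" "p - 1" 1] by (simp add: algebra_simps)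
  moreover have "a powr p = a * a powr (p - 1)"
    using False assms powr_add[of a "p - 1" 1] by simp
  ultimately show ?thesis by simp
qed (use assms in simp)

lemma tanh_half_real: "tanh (x / 2) = sinh x / (cosh x + 1)" for x :: real
proof -
  have "sinh x = 2 * sinh (x / 2) * cosh (x / 2)" "cosh x + 1 = 2 * (cosh (x / 2))\<^sup>2"
    using sinh_double[of "x / 2"] cosh_double_cosh[of "x / 2"] by simp_all
  then show ?thesis by (simp add: tanh_def power2_eq_square)
qed

lemma exp_2_artanh:
  fixes x :: real assumes "\<bar>x\<bar> < 1" shows "exp (2 * artanh x) = (1 + x) / (1 - x)"
  using assms by (simp add: artanh_def)

lemma tanh_artanh_real:
  fixes x :: real assumes "\<bar>x\<bar> < 1" shows "tanh (artanh x) = x"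
proof -
  have e: "exp (-2 * artanh x) = (1 - x) / (1 + x)"
    using exp_2_artanh[OF assms] assms by (simp add: exp_minus inverse_eq_divide)
  have "1 + x > 0" "1 - x > 0" using assms by auto
  then show ?thesis unfolding tanh_real_altdef e by (simp add: field_simps)
qed

lemma cosh_2_artanh_minus_1:
  fixes x :: real assumes "\<bar>x\<bar> < 1" shows "cosh (2 * artanh x) - 1 = 2 * x\<^sup>2 / (1 - x\<^sup>2)"
proof -
  have e: "exp (-(2 * artanh x)) = (1 - x) / (1 + x)"
    using exp_2_artanh[OF assms] assms by (simp add: exp_minus inverse_eq_divide)
  have "1 + x > 0" "1 - x > 0" "1 - x\<^sup>2 > 0" using assms abs_square_less_1[of x] by auto
  then show ?thesis
    unfolding cosh_def exp_2_artanh[OF assms] e by (simp add: field_simps power2_eq_square)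
qed

lemma cosh_2_artanh_minus_1_le:
  fixes x :: real assumes "0 \<le> x" "x < 1" shows "cosh (2 * artanh x) - 1 \<le> 2 / (1 - x)"
proof -
  have "x\<^sup>2 \<le> x" using mult_left_le[of x x] assms by (simp add: power2_eq_square)
  moreover from this have "0 < 1 - x\<^sup>2" "x\<^sup>2 \<le> 1" using assms by linarith+
  ultimately have "2 * x\<^sup>2 / (1 - x\<^sup>2) \<le> 2 / (1 - x)"
    using assms by (intro frac_le) auto
  then show ?thesis using assms by (simp add: cosh_2_artanh_minus_1)
qed

section \<open>The angle \<open>\<phi>\<close> and the radii \<open>r\<^sub>0\<close>, \<open>\<tilde>r\<^sub>0\<close>\<close>

lemma cos_phi:
  fixes R r :: real assumes "0 < R" "0 \<le> r" "r \<le> R"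
  shows "cos (phi R r) = cosh R / sinh R * tanh (r / 2)" and "0 \<le> phi R r" and "phi R r \<le> pi / 2"
proof -
  have "0 < cosh R + 1" using cosh_real_pos[of R] by linarith
  have "cosh R / sinh R * tanh (r / 2) \<le> cosh R / sinh R * tanh (R / 2)"
    using assms by (intro mult_left_mono) auto
  also have "\<dots> = cosh R / (cosh R + 1)" using assms by (simp add: tanh_half_real)
  also have "\<dots> \<le> 1" using \<open>0 < cosh R + 1\<close> by (simp add: divide_le_eq)
  finally have "0 \<le> cosh R / sinh R * tanh (r / 2)" "cosh R / sinh R * tanh (r / 2) \<le> 1"
    using assms by auto
  then show "cos (phi R r) = cosh R / sinh R * tanh (r / 2)" "0 \<le> phi R r" "phi R r \<le> pi / 2"
    unfolding phi_def using cos_arccos arccos_lbound arccos_le_pi2 by auto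
qed

lemma cos_phi_self:
  fixes R :: real assumes "0 < R" shows "cos (phi R R) = cosh R / (cosh R + 1)"
  using cos_phi[OF assms _ order.refl] assms by (simp add: tanh_half_real)

lemma phi_self_bounds:
  fixes R :: real assumes R: "0 < R"
  shows "exp (- R / 2) \<le> phi R R" and "phi R R \<le> 3 * exp (- R / 2)"
proof -
  define p where "p = phi R R"
  have p: "0 \<le> p" "p \<le> pi / 2" unfolding p_def using cos_phi[OF R _ order.refl] R by auto
  have c: "0 < cosh R + 1" using cosh_real_pos[of R] by linarith
  have "exp R / 2 \<le> cosh R + 1" "cosh R + 1 \<le> 2 * exp R"
    using R exp_gt_zero[of "- R"] unfolding cosh_def by (simp_all add: field_simps)
      (use exp_le_one_iff[of "- R"] one_le_exp_iff[of R] in linarith)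
  then have "1 / exp R \<le> 2 / (cosh R + 1)" "4 / (cosh R + 1) \<le> 9 / exp R"
    using c by (simp_all add: divide_simps)
  moreover have "1 - cos p = 1 / (cosh R + 1)"
    unfolding p_def cos_phi_self[OF R] using c by (simp add: field_simps)
  moreover have "(exp (- R / 2))\<^sup>2 = 1 / exp R" "(3 * exp (- R / 2))\<^sup>2 = 9 / exp R"
    by (simp_all add: power2_eq_square exp_minus field_simps flip: exp_add)
  ultimately have "(exp (- R / 2))\<^sup>2 \<le> 2 * (1 - cos p)" "4 * (1 - cos p) \<le> (3 * exp (- R / 2))\<^sup>2"
    by simp_all
  moreover have "2 * (1 - cos p) \<le> p\<^sup>2" "p\<^sup>2 \<le> 4 * (1 - cos p)"
    using cos_ge_one_minus_sq_div_2[of p] one_minus_cos_ge_sq_div_4[of p] p by auto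
  ultimately have lower: "(exp (- R / 2))\<^sup>2 \<le> p\<^sup>2" and upper: "p\<^sup>2 \<le> (3 * exp (- R / 2))\<^sup>2"
    by linarith+
  show "exp (- R / 2) \<le> phi R R" using power2_le_imp_le[OF lower p(1)] by (simp add: p_def)
  show "phi R R \<le> 3 * exp (- R / 2)" using power2_le_imp_le[OF upper] by (simp add: p_def)
qed

definition phi_inv :: "real \<Rightarrow> real \<Rightarrow> real" where
  "phi_inv R \<theta> = 2 * artanh (cos \<theta> * tanh R)"

lemma cos_phi_self_mul_tanh:
  fixes R :: real assumes "0 < R" shows "cos (phi R R) * tanh R = tanh (R / 2)"
  using assms by (simp add: cos_phi_self tanh_half_real tanh_def[of R])

lemma tanh_half_phi_inv:
  fixes R \<theta> :: real assumes R: "0 < R" and \<theta>: "phi R R \<le> \<bar>\<theta>\<bar>" "\<bar>\<theta>\<bar> \<le> pi / 2"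
  shows "tanh (phi_inv R \<theta> / 2) = cos \<theta> * tanh R" and "0 \<le> cos \<theta> * tanh R"
    and "cos \<theta> * tanh R \<le> tanh (R / 2)"
proof -
  have "0 \<le> cos \<theta>" using \<theta> cos_ge_zero[of "\<bar>\<theta>\<bar>"] by simp
  then show nonneg: "0 \<le> cos \<theta> * tanh R" using R by simp
  have cos_le: "cos \<bar>\<theta>\<bar> \<le> cos (phi R R)"
    using cos_phi[OF R _ order.refl] R \<theta> by (intro cos_monotone_0_pi_le) auto
  show le: "cos \<theta> * tanh R \<le> tanh (R / 2)"
    using mult_right_mono[OF cos_le, of "tanh R"] R cos_phi_self_mul_tanh[OF R] by simp
  have "\<bar>cos \<theta> * tanh R\<bar> < 1" using nonneg le tanh_real_lt_1[of "R / 2"] by linarith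
  then show "tanh (phi_inv R \<theta> / 2) = cos \<theta> * tanh R"
    by (simp add: phi_inv_def tanh_artanh_real)
qed

lemma phi_inv_strict_bounds:
  fixes R \<theta> :: real assumes R: "0 < R" and \<theta>: "phi R R < \<bar>\<theta>\<bar>" "\<bar>\<theta>\<bar> < pi / 2"
  shows "0 < phi_inv R \<theta>" and "phi_inv R \<theta> < R"
proof -
  note tanh_half = tanh_half_phi_inv[OF R less_imp_le[OF \<theta>(1)] less_imp_le[OF \<theta>(2)]]
  have "0 < cos \<theta>" using \<theta> cos_gt_zero_pi[of "\<bar>\<theta>\<bar>"] by simp
  then have "0 < tanh (phi_inv R \<theta> / 2)" using R tanh_half(1) by simp
  then show "0 < phi_inv R \<theta>" by simp
  have cos_less: "cos \<bar>\<theta>\<bar> < cos (phi R R)"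
    using cos_phi[OF R _ order.refl] R \<theta> by (intro cos_monotone_0_pi) auto
  have "tanh (phi_inv R \<theta> / 2) < tanh (R / 2)"
    using mult_strict_right_mono[OF cos_less, of "tanh R"] R tanh_half(1) cos_phi_self_mul_tanh[OF R]
    by simp
  then show "phi_inv R \<theta> < R" by simp
qed

lemma rr0_eq_phi_inv:
  fixes R \<theta> :: real assumes R: "0 < R" and \<theta>: "phi R R \<le> \<bar>\<theta>\<bar>" "\<bar>\<theta>\<bar> \<le> pi / 2"
  shows "rr0 R \<theta> = phi_inv R \<theta>"
  unfolding rr0_def
proof (rule the_equality)
  note tanh_half = tanh_half_phi_inv[OF R \<theta>]
  have coth_tanh: "cosh R / sinh R * tanh R = 1" using R by (simp add: tanh_def)
  have cos_abs: "cos \<bar>\<theta>\<bar> = cos \<theta>" by simp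
  have "phi R (phi_inv R \<theta>) = arccos (cos \<bar>\<theta>\<bar>)"
    unfolding phi_def tanh_half(1) cos_abs using coth_tanh by (simp add: mult.assoc [symmetric])
  also have "\<dots> = \<bar>\<theta>\<bar>" using \<theta> by (intro arccos_cos) auto
  moreover have "0 \<le> tanh (phi_inv R \<theta> / 2)" "tanh (phi_inv R \<theta> / 2) \<le> tanh (R / 2)"
    using tanh_half by simp_all
  ultimately show "0 \<le> phi_inv R \<theta> \<and> phi_inv R \<theta> \<le> R \<and> phi R (phi_inv R \<theta>) = \<bar>\<theta>\<bar>"
    by simp
  fix r assume r: "0 \<le> r \<and> r \<le> R \<and> phi R r = \<bar>\<theta>\<bar>"
  then have "cosh R / sinh R * tanh (r / 2) = cos \<theta>" using cos_phi[OF R] by force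
  then have "tanh (r / 2) = tanh (phi_inv R \<theta> / 2)"
    unfolding tanh_half(1) using R coth_tanh by (simp add: field_simps tanh_def)
  then show "r = phi_inv R \<theta>" by simp
qed

text \<open>The closed form of \<open>\<tilde>r\<^sub>0\<close>: the defining equation says that \<open>tanh (\<alpha> r / 2)\<close> is the
  weighted geometric mean of \<open>tanh (\<alpha> R / 2)\<close> and \<open>tanh (\<alpha> r\<^sub>0 / 2)\<close> with weights \<open>1 - \<epsilon>\<close>, \<open>\<epsilon>\<close>.\<close>
definition r_tilde :: "real \<Rightarrow> real \<Rightarrow> real \<Rightarrow> real \<Rightarrow> real" where
  "r_tilde \<alpha> R e \<theta> =
     2 / \<alpha> * artanh (tanh (\<alpha> * R / 2) powr (1 - e) * tanh (\<alpha> * phi_inv R \<theta> / 2) powr e)"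

lemma geometric_mean_bounds:
  fixes a b e :: real assumes "0 < a" "a \<le> b" "0 \<le> e" "e \<le> 1"
  shows "a \<le> b powr (1 - e) * a powr e" and "b powr (1 - e) * a powr e \<le> b"
proof -
  have "a powr (1 - e) * a powr e \<le> b powr (1 - e) * a powr e"
    "b powr (1 - e) * a powr e \<le> b powr (1 - e) * b powr e"
    using assms by (intro mult_right_mono mult_left_mono powr_mono2; simp)+
  then show "a \<le> b powr (1 - e) * a powr e" "b powr (1 - e) * a powr e \<le> b"
    using assms by (simp_all flip: powr_add)
qed

lemma ln_div_geometric_mean:
  fixes a b e :: real assumes "0 < a" "0 < b"
  shows "ln (b / (b powr (1 - e) * a powr e)) = e * ln (b / a)"
  using assms by (simp add: ln_div ln_mult ln_powr algebra_simps)

lemma r_tilde_props: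
  fixes \<alpha> R e \<theta> :: real
  assumes R: "0 < R" and \<alpha>: "0 < \<alpha>" and e: "0 \<le> e" "e \<le> 1"
    and \<theta>: "phi R R < \<bar>\<theta>\<bar>" "\<bar>\<theta>\<bar> < pi / 2"
  shows "tanh (\<alpha> * r_tilde \<alpha> R e \<theta> / 2)
           = tanh (\<alpha> * R / 2) powr (1 - e) * tanh (\<alpha> * phi_inv R \<theta> / 2) powr e"
    and "phi_inv R \<theta> \<le> r_tilde \<alpha> R e \<theta>" and "r_tilde \<alpha> R e \<theta> \<le> R"
proof -
  define tR t0 where "tR = tanh (\<alpha> * R / 2)" and "t0 = tanh (\<alpha> * phi_inv R \<theta> / 2)"
  define X where "X = tR powr (1 - e) * t0 powr e"
  note r0 = phi_inv_strict_bounds[OF R \<theta>]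
  have t0: "0 < t0" "t0 \<le> tR" unfolding t0_def tR_def using \<alpha> r0 by simp_all
  note X = geometric_mean_bounds[OF t0 e, folded X_def]
  have "\<bar>X\<bar> < 1" using X t0 tanh_real_lt_1[of "\<alpha> * R / 2"] unfolding tR_def by linarith
  then have tanh: "tanh (\<alpha> * r_tilde \<alpha> R e \<theta> / 2) = X"
    using \<alpha> by (simp add: r_tilde_def tanh_artanh_real X_def tR_def t0_def)
  then show "tanh (\<alpha> * r_tilde \<alpha> R e \<theta> / 2) = tR powr (1 - e) * t0 powr e"
    by (simp add: X_def)
  have "tanh (\<alpha> * phi_inv R \<theta> / 2) \<le> tanh (\<alpha> * r_tilde \<alpha> R e \<theta> / 2)"
    "tanh (\<alpha> * r_tilde \<alpha> R e \<theta> / 2) \<le> tanh (\<alpha> * R / 2)"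
    using X tanh by (simp_all only: t0_def tR_def)
  then show "phi_inv R \<theta> \<le> r_tilde \<alpha> R e \<theta>" "r_tilde \<alpha> R e \<theta> \<le> R"
    using \<alpha> by simp_all
qed

lemma rr0_tilde_eq_r_tilde:
  fixes \<alpha> R \<kappa> s \<theta> :: real
  assumes R: "0 < R" and \<alpha>: "0 < \<alpha>" and e: "0 \<le> eps \<alpha> \<kappa> s" "eps \<alpha> \<kappa> s \<le> 1"
    and \<theta>: "phi R R < \<bar>\<theta>\<bar>" "\<bar>\<theta>\<bar> < pi / 2"
  shows "rr0_tilde \<alpha> R \<kappa> s \<theta> = r_tilde \<alpha> R (eps \<alpha> \<kappa> s) \<theta>"
  unfolding rr0_tilde_def rr0_eq_phi_inv[OF R less_imp_le[OF \<theta>(1)] less_imp_le[OF \<theta>(2)]]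
proof (rule the_equality)
  define tR t0 where "tR = tanh (\<alpha> * R / 2)" and "t0 = tanh (\<alpha> * phi_inv R \<theta> / 2)"
  note r0 = phi_inv_strict_bounds[OF R \<theta>]
  have t0: "0 < t0" "t0 < tR" unfolding t0_def tR_def using \<alpha> r0 by simp_all
  note props = r_tilde_props[OF R \<alpha> e \<theta>, folded tR_def t0_def]
  have "ln (tR / t0) > 0" using t0 by simp
  then show "phi_inv R \<theta> \<le> r_tilde \<alpha> R (eps \<alpha> \<kappa> s) \<theta> \<and> r_tilde \<alpha> R (eps \<alpha> \<kappa> s) \<theta> \<le> R \<and>
      ln (tanh (\<alpha> * R / 2) / tanh (\<alpha> * r_tilde \<alpha> R (eps \<alpha> \<kappa> s) \<theta> / 2)) /
      ln (tanh (\<alpha> * R / 2) / tanh (\<alpha> * phi_inv R \<theta> / 2)) = eps \<alpha> \<kappa> s"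
    using props t0 by (simp add: tR_def[symmetric] t0_def[symmetric] ln_div_geometric_mean)
  fix r assume r: "phi_inv R \<theta> \<le> r \<and> r \<le> R \<and>
      ln (tanh (\<alpha> * R / 2) / tanh (\<alpha> * r / 2)) /
      ln (tanh (\<alpha> * R / 2) / tanh (\<alpha> * phi_inv R \<theta> / 2)) = eps \<alpha> \<kappa> s"
  have tr: "0 < tanh (\<alpha> * r / 2)" using r r0 \<alpha> by simp
  have "ln (tR / tanh (\<alpha> * r / 2)) = eps \<alpha> \<kappa> s * ln (tR / t0)"
    using r \<open>ln (tR / t0) > 0\<close> unfolding tR_def t0_def by (simp add: field_simps)
  also have "\<dots> = ln (tR / tanh (\<alpha> * r_tilde \<alpha> R (eps \<alpha> \<kappa> s) \<theta> / 2))"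
    unfolding props(1) using t0 by (simp add: ln_div_geometric_mean)
  finally have "ln (tR / tanh (\<alpha> * r / 2)) = ln (tR / tanh (\<alpha> * r_tilde \<alpha> R (eps \<alpha> \<kappa> s) \<theta> / 2))" .
  moreover have "0 < tanh (\<alpha> * r_tilde \<alpha> R (eps \<alpha> \<kappa> s) \<theta> / 2)"
    using props(2) r0 \<alpha> by simp
  ultimately have "tanh (\<alpha> * r / 2) = tanh (\<alpha> * r_tilde \<alpha> R (eps \<alpha> \<kappa> s) \<theta> / 2)"
    using tr t0 by (subst (asm) ln_inj_iff) auto
  then show "r = r_tilde \<alpha> R (eps \<alpha> \<kappa> s) \<theta>" using \<alpha> by simp
qed

lemma one_minus_tanh_phi_inv_ge:
  fixes \<alpha> R \<theta> :: real
  assumes R: "0 < R" and \<alpha>: "0 < \<alpha>" and \<theta>: "phi R R < \<bar>\<theta>\<bar>" "\<bar>\<theta>\<bar> < pi / 2"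
  shows "(\<theta>\<^sup>2 / 8) powr \<alpha> \<le> 1 - tanh (\<alpha> * phi_inv R \<theta> / 2)"
proof -
  define x where "x = cos \<theta> * tanh R"
  define E where "E = exp (- (\<alpha> * phi_inv R \<theta>))"
  note r0 = phi_inv_strict_bounds[OF R \<theta>]
  have E: "0 < E" "E \<le> 1" using r0 \<alpha> by (simp_all add: E_def)
  have cos: "0 < cos \<theta>" using \<theta> cos_gt_zero_pi[of "\<bar>\<theta>\<bar>"] by simp
  have "x \<le> tanh R" unfolding x_def using R cos by (intro mult_left_le_one_le) auto
  then have "x < 1" using tanh_real_lt_1[of R] by linarith
  moreover have "0 < x" "x \<le> cos \<theta>"
    using R cos tanh_real_lt_1[of R] unfolding x_def by (simp_all add: mult_le_cancel_left1)
  ultimately have x: "0 < x" "x \<le> cos \<theta>" "x < 1" by simp_all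
  have "\<theta>\<^sup>2 / 8 \<le> (1 - cos \<theta>) / 2" using one_minus_cos_ge_sq_div_4[of \<theta>] \<theta> by simp
  also have "\<dots> \<le> (1 - x) / 2" using x by simp
  also have "\<dots> \<le> (1 - x) / (1 + x)" using x by (intro divide_left_mono) auto
  also have "\<dots> = exp (- phi_inv R \<theta>)"
    using exp_2_artanh[of x] x by (simp add: phi_inv_def x_def[symmetric] exp_minus inverse_eq_divide)
  finally have "(\<theta>\<^sup>2 / 8) powr \<alpha> \<le> E"
    unfolding E_def using \<alpha> powr_mono2[of \<alpha> "\<theta>\<^sup>2 / 8" "exp (- phi_inv R \<theta>)"]
    by (simp add: powr_def)
  also have "E \<le> 2 * E / (1 + E)" using E by (simp add: field_simps)
  also have "2 * E / (1 + E) = 1 - tanh (\<alpha> * phi_inv R \<theta> / 2)"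
  proof -
    have "tanh (\<alpha> * phi_inv R \<theta> / 2) = (1 - E) / (1 + E)"
      unfolding tanh_real_altdef E_def by simp
    then show ?thesis using E by (simp add: field_simps)
  qed
  finally show ?thesis .
qed

lemma cosh_r_tilde_le:
  fixes \<alpha> R e \<theta> :: real
  assumes R: "0 < R" and \<alpha>: "0 < \<alpha>" and e: "0 < e" "e \<le> 1"
    and \<theta>: "phi R R < \<bar>\<theta>\<bar>" "\<bar>\<theta>\<bar> < pi / 2"
  shows "cosh (\<alpha> * r_tilde \<alpha> R e \<theta>) - 1 \<le> 2 / (e * (\<theta>\<^sup>2 / 8) powr \<alpha>)"
proof -
  define tR t0 where "tR = tanh (\<alpha> * R / 2)" and "t0 = tanh (\<alpha> * phi_inv R \<theta> / 2)"
  define X where "X = tR powr (1 - e) * t0 powr e"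
  note r0 = phi_inv_strict_bounds[OF R \<theta>]
  have t0: "0 < t0" "t0 < tR" "tR < 1" unfolding t0_def tR_def using \<alpha> r0 tanh_real_lt_1 by simp_all
  have "\<theta> \<noteq> 0" using \<theta> cos_phi[OF R _ order.refl] R by auto
  then have Q: "0 < e * (\<theta>\<^sup>2 / 8) powr \<alpha>" using e by simp
  have "X \<le> t0 powr e" unfolding X_def using t0 e powr_le1[of "1 - e" tR]
    by (intro mult_left_le_one_le) auto
  also have "\<dots> \<le> 1 - e * (1 - t0)" using t0 e by (intro powr_le_one_minus_mult) auto
  finally have "e * (\<theta>\<^sup>2 / 8) powr \<alpha> \<le> 1 - X"
    using mult_left_mono[OF one_minus_tanh_phi_inv_ge[OF R \<alpha> \<theta>, folded t0_def], of e] e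
    by linarith
  moreover have "0 \<le> X" unfolding X_def by simp
  moreover have "\<alpha> * r_tilde \<alpha> R e \<theta> = 2 * artanh X"
    using \<alpha> by (simp add: r_tilde_def X_def tR_def t0_def)
  ultimately show ?thesis
    using cosh_2_artanh_minus_1_le[of X] Q by (simp add: order_trans[OF _ frac_le])
qed

section \<open>The measure \<open>\<mu>\<close> in polar coordinates\<close>

lemma borel_measurable_sinh [measurable]: "sinh \<in> borel_measurable (borel :: real measure)"
  by (intro borel_measurable_continuous_onI continuous_intros)

lemma borel_measurable_cosh [measurable]: "cosh \<in> borel_measurable (borel :: real measure)"
  by (intro borel_measurable_continuous_onI continuous_intros)

definition polar_density :: "real \<Rightarrow> real \<Rightarrow> real \<Rightarrow> real \<times> real \<Rightarrow> ennreal" where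
  "polar_density K \<alpha> R x = ennreal (K * sinh (\<alpha> * fst x)) * indicator ({0..R} \<times> {-pi<..pi}) x"

lemma borel_measurable_polar_density [measurable]:
  "polar_density K \<alpha> R \<in> borel_measurable (lborel \<Otimes>\<^sub>M lborel)"
  unfolding polar_density_def by measurable

lemma mu_meas_eq_density:
  "mu_meas \<nu> \<alpha> n = density lborel
     (polar_density (real n * \<alpha> / (2 * pi * (cosh (\<alpha> * hypR \<nu> n) - 1))) \<alpha> (hypR \<nu> n))"
  unfolding mu_meas_def
proof (intro arg_cong[where f = "density lborel"] ext)
  fix x :: "real \<times> real"
  show "(case x of (r, \<theta>) \<Rightarrow> if (r, \<theta>) \<in> polar_disk (hypR \<nu> n)
          then ennreal (real n * \<alpha> * sinh (\<alpha> * r) / (2 * pi * (cosh (\<alpha> * hypR \<nu> n) - 1))) else 0)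
        = polar_density (real n * \<alpha> / (2 * pi * (cosh (\<alpha> * hypR \<nu> n) - 1))) \<alpha> (hypR \<nu> n) x"
    by (cases x) (auto simp: polar_density_def polar_disk_def indicator_def)
qed

lemma emeasure_polar_density:
  assumes "S \<in> sets (lborel \<Otimes>\<^sub>M lborel)"
  shows "emeasure (density lborel (polar_density K \<alpha> R)) S
           = (\<integral>\<^sup>+\<theta>. (\<integral>\<^sup>+r. polar_density K \<alpha> R (r, \<theta>) * indicator S (r, \<theta>) \<partial>lborel) \<partial>lborel)"
proof -
  have "emeasure (density lborel (polar_density K \<alpha> R)) S
          = (\<integral>\<^sup>+x. polar_density K \<alpha> R x * indicator S x \<partial>(lborel \<Otimes>\<^sub>M lborel))"
    using assms borel_measurable_polar_density unfolding lborel_prod by (intro emeasure_density)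
  also have "\<dots> = (\<integral>\<^sup>+\<theta>. (\<integral>\<^sup>+r. polar_density K \<alpha> R (r, \<theta>) * indicator S (r, \<theta>) \<partial>lborel) \<partial>lborel)"
    by (rule lborel_pair.nn_integral_snd[symmetric]) (use assms in measurable)
  finally show ?thesis .
qed

lemma nn_integral_sinh_Icc:
  fixes K \<alpha> a :: real assumes "0 \<le> a" "0 < \<alpha>" "0 \<le> K"
  shows "(\<integral>\<^sup>+r. ennreal (K * sinh (\<alpha> * r)) * indicator {0..a} r \<partial>lborel)
           = ennreal (K * (cosh (\<alpha> * a) - 1) / \<alpha>)"
proof -
  have "(\<integral>\<^sup>+r. ennreal (K * sinh (\<alpha> * r)) * indicator {0..a} r \<partial>lborel)
          = ennreal (K * cosh (\<alpha> * a) / \<alpha> - K * cosh (\<alpha> * 0) / \<alpha>)"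
    using assms
    by (intro nn_integral_FTC_Icc) (auto intro!: derivative_eq_intros)
  then show ?thesis by (simp add: right_diff_distrib diff_divide_distrib)
qed

lemma emeasure_polar_density_sector:
  fixes t R \<alpha> K :: real assumes "0 \<le> t" "t < pi" "0 \<le> R" "0 < \<alpha>" "0 \<le> K"
  shows "emeasure (density lborel (polar_density K \<alpha> R)) ({0..R} \<times> {-t..t})
           = ennreal (K * (cosh (\<alpha> * R) - 1) / \<alpha> * (2 * t))"
proof -
  have "(\<integral>\<^sup>+r. polar_density K \<alpha> R (r, \<theta>) * indicator ({0..R} \<times> {-t..t}) (r, \<theta>) \<partial>lborel)
          = ennreal (K * (cosh (\<alpha> * R) - 1) / \<alpha>) * indicator {-t..t} \<theta>" for \<theta>
  proof (cases "\<theta> \<in> {-t..t}")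
    case True
    then have "(\<integral>\<^sup>+r. polar_density K \<alpha> R (r, \<theta>) * indicator ({0..R} \<times> {-t..t}) (r, \<theta>) \<partial>lborel)
        = (\<integral>\<^sup>+r. ennreal (K * sinh (\<alpha> * r)) * indicator {0..R} r \<partial>lborel)"
      using assms by (intro nn_integral_cong) (auto simp: polar_density_def indicator_def)
    then show ?thesis using True nn_integral_sinh_Icc[of R \<alpha> K] assms by simp
  next
    case False
    then have "\<And>r. polar_density K \<alpha> R (r, \<theta>) * indicator ({0..R} \<times> {-t..t}) (r, \<theta>) = 0"
      by (simp add: indicator_def)
    then show ?thesis using False by simp
  qed
  then have "emeasure (density lborel (polar_density K \<alpha> R)) ({0..R} \<times> {-t..t})
      = ennreal (K * (cosh (\<alpha> * R) - 1) / \<alpha>) * emeasure lborel {-t..t}"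
    by (simp add: emeasure_polar_density nn_integral_cmult_indicator)
  also have "\<dots> = ennreal (K * (cosh (\<alpha> * R) - 1) / \<alpha>) * ennreal (2 * t)" using assms by simp
  also have "\<dots> = ennreal (K * (cosh (\<alpha> * R) - 1) / \<alpha> * (2 * t))"
    using assms cosh_real_ge_1[of "\<alpha> * R"] by (intro ennreal_mult[symmetric]) auto
  finally show ?thesis .
qed

lemma nn_integral_powr_Icc_le:
  fixes c q a b :: real assumes q: "1 < q" and ab: "0 < a" "a \<le> b" and c: "0 \<le> c"
  shows "(\<integral>\<^sup>+x. ennreal (c * \<bar>x\<bar> powr - q) * indicator {a..b} x \<partial>lborel)
           \<le> ennreal (c * a powr (1 - q) / (q - 1))"
proof -
  have "(\<integral>\<^sup>+x. ennreal (c * \<bar>x\<bar> powr - q) * indicator {a..b} x \<partial>lborel)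
          = ennreal (c * b powr (1 - q) / (1 - q) - c * a powr (1 - q) / (1 - q))"
  proof (rule nn_integral_FTC_Icc)
    fix x assume "x \<in> {a..b}"
    moreover have "1 + q * q - q * 2 > 0" using q mult_pos_pos[of "q - 1" "q - 1"] by (simp add: algebra_simps)
    ultimately show "((\<lambda>x. c * x powr (1 - q) / (1 - q)) has_real_derivative c * \<bar>x\<bar> powr - q) (at x)"
      using ab q by (auto intro!: derivative_eq_intros simp: field_simps)
  qed (use ab c in auto)
  also have "\<dots> \<le> ennreal (c * a powr (1 - q) / (q - 1))"
  proof (rule ennreal_leI)
    have "c * b powr (1 - q) / (1 - q) - c * a powr (1 - q) / (1 - q)
            = c * a powr (1 - q) / (q - 1) - c * b powr (1 - q) / (q - 1)"
      using q by (simp add: field_simps)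
    moreover have "0 \<le> c * b powr (1 - q) / (q - 1)" using c q by simp
    ultimately show "c * b powr (1 - q) / (1 - q) - c * a powr (1 - q) / (1 - q)
                       \<le> c * a powr (1 - q) / (q - 1)" by linarith
  qed
  finally show ?thesis .
qed

lemma nn_integral_abs_powr_le:
  fixes c q a b :: real assumes q: "1 < q" and ab: "0 < a" "a \<le> b" and c: "0 \<le> c"
  shows "(\<integral>\<^sup>+x. ennreal (c * \<bar>x\<bar> powr - q) * indicator {x. a \<le> \<bar>x\<bar> \<and> \<bar>x\<bar> \<le> b} x \<partial>lborel)
           \<le> ennreal (2 * (c * a powr (1 - q) / (q - 1)))"
proof -
  define f where "f x = ennreal (c * \<bar>x\<bar> powr - q)" for x :: real
  have [measurable]: "f \<in> borel_measurable borel" unfolding f_def by measurable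
  have "(\<integral>\<^sup>+x. f x * indicator {-b..-a} x \<partial>lborel) = (\<integral>\<^sup>+x. f x * indicator {a..b} x \<partial>lborel)"
    using nn_integral_real_affine[of "\<lambda>x. f x * indicator {-b..-a} x" "-1" 0]
    by (simp add: f_def indicator_def conj_commute)
  moreover have "indicator {x. a \<le> \<bar>x\<bar> \<and> \<bar>x\<bar> \<le> b} x = indicator {a..b} x + (indicator {-b..-a} x :: ennreal)"
    for x :: real using ab by (auto simp: indicator_def)
  ultimately have "(\<integral>\<^sup>+x. f x * indicator {x. a \<le> \<bar>x\<bar> \<and> \<bar>x\<bar> \<le> b} x \<partial>lborel)
                     = 2 * (\<integral>\<^sup>+x. f x * indicator {a..b} x \<partial>lborel)"
    by (simp add: distrib_left nn_integral_add mult_2)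
  also have "\<dots> \<le> 2 * ennreal (c * a powr (1 - q) / (q - 1))"
    unfolding f_def by (intro mult_left_mono nn_integral_powr_Icc_le assms) auto
  also have "\<dots> = ennreal (2 * (c * a powr (1 - q) / (q - 1)))"
    using ennreal_mult'[of 2 "c * a powr (1 - q) / (q - 1)"] by simp
  finally show ?thesis unfolding f_def .
qed

definition tail_region :: "real \<Rightarrow> real \<Rightarrow> real \<Rightarrow> real \<Rightarrow> (real \<times> real) set" where
  "tail_region \<alpha> R e t =
     {x. 0 \<le> fst x \<and> t < \<bar>snd x\<bar> \<and> \<bar>snd x\<bar> < pi / 2 \<and> fst x \<le> r_tilde \<alpha> R e (snd x)}"

lemma tail_region_sets: "tail_region \<alpha> R e t \<in> sets (lborel \<Otimes>\<^sub>M lborel)"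
proof -
  have [measurable]: "r_tilde \<alpha> R e \<in> borel_measurable borel"
    unfolding r_tilde_def phi_inv_def artanh_def tanh_def by measurable
  have "tail_region \<alpha> R e t = {x \<in> space (lborel \<Otimes>\<^sub>M lborel).
          0 \<le> fst x \<and> t < \<bar>snd x\<bar> \<and> \<bar>snd x\<bar> < pi / 2 \<and> fst x \<le> r_tilde \<alpha> R e (snd x)}"
    by (simp add: tail_region_def space_pair_measure)
  also have "\<dots> \<in> sets (lborel \<Otimes>\<^sub>M lborel)" by measurable
  finally show ?thesis .
qed

lemma nn_integral_tail_region_le:
  fixes \<alpha> R e t K \<theta> :: real
  assumes R: "0 < R" and \<alpha>: "0 < \<alpha>" and e: "0 < e" "e \<le> 1" and K: "0 \<le> K" and t: "phi R R \<le> t"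
  shows "(\<integral>\<^sup>+r. polar_density K \<alpha> R (r, \<theta>) * indicator (tail_region \<alpha> R e t) (r, \<theta>) \<partial>lborel)
           \<le> ennreal (2 * 8 powr \<alpha> * K / (\<alpha> * e) * \<bar>\<theta>\<bar> powr - (2 * \<alpha>))
               * indicator {\<theta>. t \<le> \<bar>\<theta>\<bar> \<and> \<bar>\<theta>\<bar> \<le> pi / 2} \<theta>"
proof (cases "t < \<bar>\<theta>\<bar> \<and> \<bar>\<theta>\<bar> < pi / 2")
  case True
  then have \<theta>: "phi R R < \<bar>\<theta>\<bar>" "\<bar>\<theta>\<bar> < pi / 2" "\<theta> \<noteq> 0"
    using t cos_phi(2)[OF R _ order.refl] R by auto
  have "\<theta>\<^sup>2 = \<bar>\<theta>\<bar> powr 2" using \<theta>(3) by (simp add: powr_numeral)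
  then have "(\<theta>\<^sup>2) powr \<alpha> = \<bar>\<theta>\<bar> powr (2 * \<alpha>)" by (simp only: powr_powr mult.commute)
  then have powr_sq: "(\<theta>\<^sup>2 / 8) powr \<alpha> = \<bar>\<theta>\<bar> powr (2 * \<alpha>) / 8 powr \<alpha>"
    by (simp add: powr_divide)
  note r_tilde = r_tilde_props[OF R \<alpha> _ e(2) \<theta>(1,2)] phi_inv_strict_bounds[OF R \<theta>(1,2)]
  have "(\<integral>\<^sup>+r. polar_density K \<alpha> R (r, \<theta>) * indicator (tail_region \<alpha> R e t) (r, \<theta>) \<partial>lborel)
      = (\<integral>\<^sup>+r. ennreal (K * sinh (\<alpha> * r)) * indicator {0..r_tilde \<alpha> R e \<theta>} r \<partial>lborel)"
    using True \<theta> r_tilde e t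
    by (intro nn_integral_cong) (auto simp: polar_density_def tail_region_def indicator_def)
  also have "\<dots> = ennreal (K * (cosh (\<alpha> * r_tilde \<alpha> R e \<theta>) - 1) / \<alpha>)"
    using r_tilde e \<alpha> K by (intro nn_integral_sinh_Icc) auto
  also have "\<dots> \<le> ennreal (K * (2 / (e * (\<theta>\<^sup>2 / 8) powr \<alpha>)) / \<alpha>)"
    using cosh_r_tilde_le[OF R \<alpha> e \<theta>(1,2)] K \<alpha>
    by (intro ennreal_leI divide_right_mono mult_left_mono) auto
  also have "K * (2 / (e * (\<theta>\<^sup>2 / 8) powr \<alpha>)) / \<alpha> = 2 * 8 powr \<alpha> * K / (\<alpha> * e) * \<bar>\<theta>\<bar> powr - (2 * \<alpha>)"
    using e \<alpha> unfolding powr_sq by (simp add: powr_minus field_simps)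
  finally show ?thesis using True by simp
next
  case False
  then have "(\<lambda>r. polar_density K \<alpha> R (r, \<theta>) * indicator (tail_region \<alpha> R e t) (r, \<theta>)) = (\<lambda>_. 0)"
    by (auto simp: indicator_def tail_region_def)
  then show ?thesis by simp
qed

lemma emeasure_tail_region_le:
  fixes \<alpha> R e t K :: real
  assumes R: "0 < R" and \<alpha>: "1 / 2 < \<alpha>" and e: "0 < e" "e \<le> 1" and K: "0 \<le> K"
    and t: "phi R R \<le> t" "0 < t" "t \<le> pi / 2"
  shows "emeasure (density lborel (polar_density K \<alpha> R)) (tail_region \<alpha> R e t)
           \<le> ennreal (4 * 8 powr \<alpha> * K * t powr (1 - 2 * \<alpha>) / (\<alpha> * e * (2 * \<alpha> - 1)))"
proof -
  define c where "c = 2 * 8 powr \<alpha> * K / (\<alpha> * e)"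
  have "0 < \<alpha>" "0 \<le> c" using \<alpha> e K by (simp_all add: c_def)
  have "emeasure (density lborel (polar_density K \<alpha> R)) (tail_region \<alpha> R e t)
      \<le> (\<integral>\<^sup>+\<theta>. ennreal (c * \<bar>\<theta>\<bar> powr - (2 * \<alpha>)) * indicator {\<theta>. t \<le> \<bar>\<theta>\<bar> \<and> \<bar>\<theta>\<bar> \<le> pi / 2} \<theta> \<partial>lborel)"
    unfolding emeasure_polar_density[OF tail_region_sets] c_def
    using nn_integral_tail_region_le[OF R \<open>0 < \<alpha>\<close> e K t(1)] by (intro nn_integral_mono)
  also have "\<dots> \<le> ennreal (2 * (c * t powr (1 - 2 * \<alpha>) / (2 * \<alpha> - 1)))"
    using \<alpha> t \<open>0 \<le> c\<close> by (intro nn_integral_abs_powr_le) auto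
  also have "2 * (c * t powr (1 - 2 * \<alpha>) / (2 * \<alpha> - 1))
               = 4 * 8 powr \<alpha> * K * t powr (1 - 2 * \<alpha>) / (\<alpha> * e * (2 * \<alpha> - 1))"
    by (simp add: c_def field_simps)
  finally show ?thesis .
qed

section \<open>Asymptotic estimates\<close>

definition half_width :: "real \<Rightarrow> real \<Rightarrow> nat \<Rightarrow> real \<Rightarrow> real \<Rightarrow> real" where
  "half_width \<nu> \<alpha> n \<kappa> s = phi (hypR \<nu> n) (hypR \<nu> n) + \<kappa> * phi_s \<alpha> (hypR \<nu> n) s"

lemma D_s_eq_sector_Un_tail:
  fixes \<nu> \<alpha> \<kappa> s :: real and n :: nat
  defines "R \<equiv> hypR \<nu> n" and "w \<equiv> half_width \<nu> \<alpha> n \<kappa> s"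
  assumes R: "0 < R" and \<alpha>: "0 < \<alpha>" and e: "0 \<le> eps \<alpha> \<kappa> s" "eps \<alpha> \<kappa> s \<le> 1"
    and w: "phi R R \<le> w" "w \<le> pi / 2"
  shows "D_s \<nu> \<alpha> n \<kappa> s = {0..R} \<times> {-w..w} \<union> tail_region \<alpha> R (eps \<alpha> \<kappa> s) w"
proof -
  have D: "D_s \<nu> \<alpha> n \<kappa> s = {(r, \<theta>) \<in> polar_disk R. \<bar>\<theta>\<bar> \<le> pi / 2 \<and>
      (\<bar>\<theta>\<bar> \<le> w \<or> (phi R R \<le> \<bar>\<theta>\<bar> \<and> \<bar>\<theta>\<bar> < pi / 2 \<and> r \<le> rr0_tilde \<alpha> R \<kappa> s \<theta>))}"
    unfolding D_s_def Let_def R_def w_def half_width_def ..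
  have "(r, \<theta>) \<in> D_s \<nu> \<alpha> n \<kappa> s \<longleftrightarrow> (r, \<theta>) \<in> {0..R} \<times> {-w..w} \<union> tail_region \<alpha> R (eps \<alpha> \<kappa> s) w"
    for r \<theta>
  proof (cases "\<bar>\<theta>\<bar> \<le> w")
    case True
    moreover have "- pi < \<theta>" "\<theta> \<le> pi" using True w(2) pi_gt_zero unfolding abs_le_iff by linarith+
    ultimately show ?thesis using w by (auto simp: D polar_disk_def tail_region_def)
  next
    case False
    then have "phi R R < \<bar>\<theta>\<bar> \<Longrightarrow> \<bar>\<theta>\<bar> < pi / 2 \<Longrightarrow>
      rr0_tilde \<alpha> R \<kappa> s \<theta> = r_tilde \<alpha> R (eps \<alpha> \<kappa> s) \<theta> \<and> r_tilde \<alpha> R (eps \<alpha> \<kappa> s) \<theta> \<le> R"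
      using rr0_tilde_eq_r_tilde[OF R \<alpha> e] r_tilde_props(3)[OF R \<alpha> e] by blast
    then show ?thesis using False w by (auto simp: D polar_disk_def tail_region_def)
  qed
  then show ?thesis by auto
qed

lemma eps_bounds:
  fixes \<alpha> \<kappa> s :: real assumes \<alpha>: "1 / 2 \<le> \<alpha>" and \<kappa>: "1 \<le> \<kappa>" and s: "0 < s"
  shows "0 < eps \<alpha> \<kappa> s" and "eps \<alpha> \<kappa> s \<le> 1"
    and "1 / eps \<alpha> \<kappa> s \<le> (1 + \<kappa> * s powr (1 / (2 * \<alpha>))) powr (2 * \<alpha>)"
proof -
  define D where "D = (1 + \<kappa> * s powr (1 / (2 * \<alpha>))) powr (2 * \<alpha>)"
  have "s = (s powr (1 / (2 * \<alpha>))) powr (2 * \<alpha>)" using \<alpha> s by (simp add: powr_powr)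
  also have "\<dots> \<le> (\<kappa> * s powr (1 / (2 * \<alpha>))) powr (2 * \<alpha>)"
    using \<kappa> \<alpha> by (intro powr_mono2) (auto simp: mult_le_cancel_right1)
  finally have D: "1 + s \<le> D"
    unfolding D_def using one_plus_powr_le_powr_one_plus[of "\<kappa> * s powr (1 / (2 * \<alpha>))" "2 * \<alpha>"] \<kappa> \<alpha>
    by simp
  have e: "eps \<alpha> \<kappa> s = (1 + s) / D" by (simp add: eps_def D_def)
  show "0 < eps \<alpha> \<kappa> s" "eps \<alpha> \<kappa> s \<le> 1" "1 / eps \<alpha> \<kappa> s \<le> D"
    unfolding e using D s by (auto simp: divide_simps)
qed

lemma exp_neg_half_hypR:
  fixes \<nu> :: real assumes "0 < \<nu>" "0 < n" shows "exp (- hypR \<nu> n / 2) = \<nu> / real n"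
proof -
  have "- hypR \<nu> n / 2 = - ln (real n / \<nu>)" by (simp add: hypR_def)
  then show ?thesis using assms by (simp add: exp_minus)
qed

lemma hypR_gt:
  fixes \<nu> c :: real assumes "0 < \<nu>" "\<nu> * exp (c / 2) < real n" shows "c < hypR \<nu> n"
proof -
  have "exp (c / 2) < real n / \<nu>" using assms by (simp add: field_simps)
  moreover from this have "0 < real n / \<nu>" using exp_gt_zero[of "c / 2"] by linarith
  ultimately have "ln (exp (c / 2)) < ln (real n / \<nu>)" by (simp only: ln_less_cancel_iff exp_gt_zero)
  then show ?thesis by (simp add: hypR_def)
qed

lemma phi_s_hypR:
  fixes \<nu> \<alpha> s :: real assumes "0 < \<nu>" "0 < n" "0 < s"
  shows "phi_s \<alpha> (hypR \<nu> n) s = s powr (1 / (2 * \<alpha>)) * (\<nu> / real n)"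
proof -
  have "hypR \<nu> n = ln (real n / \<nu>) + ln (real n / \<nu>)" by (simp add: hypR_def)
  then have "exp (hypR \<nu> n) = (real n / \<nu>)\<^sup>2"
    using assms by (simp only: exp_add) (simp add: power2_eq_square)
  moreover have "sqrt (s powr (1 / \<alpha>)) = s powr (1 / (2 * \<alpha>))"
    using assms by (simp add: powr_half_sqrt[symmetric] powr_powr mult.commute)
  ultimately show ?thesis using assms by (simp add: phi_s_def real_sqrt_divide)
qed

lemma half_width_bounds:
  fixes \<nu> \<alpha> \<kappa> s :: real
  assumes \<nu>: "0 < \<nu>" "\<nu> < real n" and \<kappa>: "0 \<le> \<kappa>" and s: "0 < s"
  shows "\<nu> / real n * (1 + \<kappa> * s powr (1 / (2 * \<alpha>))) \<le> half_width \<nu> \<alpha> n \<kappa> s"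
    and "half_width \<nu> \<alpha> n \<kappa> s \<le> 3 * (\<nu> / real n) * (1 + \<kappa> * s powr (1 / (2 * \<alpha>)))"
proof -
  define u X where "u = \<nu> / real n" and "X = \<kappa> * s powr (1 / (2 * \<alpha>))"
  have "0 < n" "0 < hypR \<nu> n" using \<nu> hypR_gt[of \<nu> 0 n] by auto
  note phi = phi_self_bounds[OF \<open>0 < hypR \<nu> n\<close>, unfolded exp_neg_half_hypR[OF \<nu>(1) \<open>0 < n\<close>]]
  have "half_width \<nu> \<alpha> n \<kappa> s = phi (hypR \<nu> n) (hypR \<nu> n) + u * X"
    by (simp add: half_width_def phi_s_hypR[OF \<nu>(1) \<open>0 < n\<close> s] u_def X_def)
  moreover have "0 \<le> u * X" using \<nu> \<kappa> by (simp add: u_def X_def)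
  ultimately show "u * (1 + X) \<le> half_width \<nu> \<alpha> n \<kappa> s" "half_width \<nu> \<alpha> n \<kappa> s \<le> 3 * u * (1 + X)"
    using phi unfolding u_def[symmetric] by (simp_all add: algebra_simps)
qed

lemma emeasure_mu_meas_sector:
  fixes \<nu> \<alpha> t :: real
  assumes "0 < \<nu>" "\<nu> < real n" "0 < \<alpha>" "0 \<le> t" "t < pi"
  shows "emeasure (mu_meas \<nu> \<alpha> n) ({0..hypR \<nu> n} \<times> {-t..t}) = ennreal (real n * t / pi)"
proof -
  have "0 < hypR \<nu> n" using assms hypR_gt[of \<nu> 0 n] by auto
  then have "\<alpha> * hypR \<nu> n \<noteq> 0" using assms by simp
  define C where "C = cosh (\<alpha> * hypR \<nu> n) - 1"
  have C: "0 < C"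
    using cosh_real_ge_1[of "\<alpha> * hypR \<nu> n"] cosh_real_one_iff[of "\<alpha> * hypR \<nu> n"] \<open>\<alpha> * hypR \<nu> n \<noteq> 0\<close>
    unfolding C_def by linarith
  have "emeasure (mu_meas \<nu> \<alpha> n) ({0..hypR \<nu> n} \<times> {-t..t})
      = ennreal (real n * \<alpha> / (2 * pi * C) * C / \<alpha> * (2 * t))"
    unfolding mu_meas_eq_density C_def using assms C \<open>0 < hypR \<nu> n\<close>
    by (intro emeasure_polar_density_sector) (auto simp: C_def)
  also have "\<dots> = ennreal (real n * t / pi)" using assms C by (simp add: field_simps)
  finally show ?thesis .
qed

lemma exp_div_4_le_cosh_minus_1:
  fixes y :: real assumes "2 \<le> y" shows "exp y / 4 \<le> cosh y - 1"
proof -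
  have "5 \<le> exp (2 :: real)" using exp_lower_Taylor_quadratic[of 2] by simp
  also have "\<dots> \<le> exp y" using assms by simp
  finally have "4 \<le> exp y + 2 * exp (- y)" using exp_gt_zero[of "- y"] by linarith
  then show ?thesis unfolding cosh_def by (simp add: field_simps)
qed

lemma inverse_cosh_mult_eps_le:
  fixes \<nu> \<alpha> \<kappa> s :: real and n :: nat
  assumes \<nu>: "0 < \<nu>" "\<nu> * exp 2 < real n" and \<alpha>: "1 / 2 < \<alpha>" and s: "0 < s" and \<kappa>: "1 \<le> \<kappa>"
  shows "1 / ((cosh (\<alpha> * hypR \<nu> n) - 1) * eps \<alpha> \<kappa> s) \<le> 4 * half_width \<nu> \<alpha> n \<kappa> s powr (2 * \<alpha>)"
proof -
  define R u Q where "R = hypR \<nu> n" and "u = \<nu> / real n" and "Q = 1 + \<kappa> * s powr (1 / (2 * \<alpha>))"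
  have "\<nu> < \<nu> * exp 2" using \<nu> by simp
  then have n: "\<nu> < real n" "0 < n" using \<nu> by linarith+
  have u: "0 < u" "exp (- R / 2) = u" unfolding u_def R_def using \<nu> n exp_neg_half_hypR by auto
  have Q: "1 \<le> Q" using \<kappa> by (simp add: Q_def)
  note e = eps_bounds[OF less_imp_le[OF \<alpha>(1)] \<kappa> s, folded Q_def]
  have "1 / 2 * 4 < \<alpha> * R" using \<alpha> hypR_gt[of \<nu> 4 n] \<nu> by (intro mult_strict_mono) (auto simp: R_def)
  then have C: "exp (\<alpha> * R) / 4 \<le> cosh (\<alpha> * R) - 1" by (intro exp_div_4_le_cosh_minus_1) simp
  moreover have "0 < exp (\<alpha> * R) / 4" by simp
  moreover from calculation have "0 < cosh (\<alpha> * R) - 1" by linarith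
  ultimately have "1 / (cosh (\<alpha> * R) - 1) \<le> 1 / (exp (\<alpha> * R) / 4)"
    by (intro divide_left_mono mult_pos_pos) auto
  also have "\<dots> = 4 * exp (- (\<alpha> * R))" by (simp add: exp_minus inverse_eq_divide)
  also have "exp (- (\<alpha> * R)) = u powr (2 * \<alpha>)" unfolding u(2)[symmetric] powr_def by simp
  finally have "1 / (cosh (\<alpha> * R) - 1) * (1 / eps \<alpha> \<kappa> s) \<le> 4 * u powr (2 * \<alpha>) * Q powr (2 * \<alpha>)"
    using e(3) by (rule mult_mono) (use e in simp_all)
  also have "\<dots> = 4 * (u * Q) powr (2 * \<alpha>)" using u Q by (simp add: powr_mult)
  also have "\<dots> \<le> 4 * half_width \<nu> \<alpha> n \<kappa> s powr (2 * \<alpha>)"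
  proof -
    have "u * Q \<le> half_width \<nu> \<alpha> n \<kappa> s"
      using half_width_bounds(1)[OF \<nu>(1) n(1) _ s, of \<kappa> \<alpha>] \<kappa> by (simp add: u_def Q_def)
    moreover have "0 \<le> u * Q" using u Q by simp
    ultimately show ?thesis using \<alpha> by (simp add: powr_mono2)
  qed
  finally show ?thesis by (simp add: R_def)
qed

lemma emeasure_mu_meas_tail_le:
  fixes \<nu> \<alpha> \<kappa> s :: real and n :: nat
  defines "w \<equiv> half_width \<nu> \<alpha> n \<kappa> s"
  assumes \<nu>: "0 < \<nu>" "\<nu> * exp 2 < real n" and \<alpha>: "1 / 2 < \<alpha>" "\<alpha> \<le> 1"
    and s: "0 < s" and \<kappa>: "1 \<le> \<kappa>" and w: "w \<le> pi / 2"
  shows "emeasure (mu_meas \<nu> \<alpha> n) (tail_region \<alpha> (hypR \<nu> n) (eps \<alpha> \<kappa> s) w)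
           \<le> ennreal (64 * real n * w / (pi * (2 * \<alpha> - 1)))"
proof -
  define R e C K where "R = hypR \<nu> n" and "e = eps \<alpha> \<kappa> s" and "C = cosh (\<alpha> * R) - 1"
    and "K = real n * \<alpha> / (2 * pi * C)"
  define M where "M = 2 * 8 powr \<alpha> * real n / (pi * (2 * \<alpha> - 1))"
  have "\<nu> < \<nu> * exp 2" using \<nu> by simp
  then have n: "\<nu> < real n" "0 < n" using \<nu> by linarith+
  have "0 < R" unfolding R_def using hypR_gt[of \<nu> 0 n] \<nu> n by simp
  then have "cosh (\<alpha> * R) \<noteq> 1" using \<alpha> by simp
  then have "0 < C" using cosh_real_ge_1[of "\<alpha> * R"] unfolding C_def by linarith
  note e = eps_bounds[OF less_imp_le[OF \<alpha>(1)] \<kappa> s, folded e_def]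
  have "0 < \<nu> / real n * (1 + \<kappa> * s powr (1 / (2 * \<alpha>)))" using \<nu> n \<kappa> by (simp add: add_pos_nonneg)
  then have "0 < w" using half_width_bounds(1)[OF \<nu>(1) n(1) _ s, of \<kappa> \<alpha>] \<kappa> by (simp add: w_def)
  have "phi R R \<le> w" using \<kappa> by (simp add: w_def R_def half_width_def phi_s_def)
  have "4 * 8 powr \<alpha> * K * w powr (1 - 2 * \<alpha>) / (\<alpha> * e * (2 * \<alpha> - 1))
          = M * w powr (1 - 2 * \<alpha>) * (1 / (C * e))"
    using \<open>0 < C\<close> e(1) \<alpha> by (simp add: K_def M_def field_simps)
  also have "\<dots> \<le> M * w powr (1 - 2 * \<alpha>) * (4 * w powr (2 * \<alpha>))"
    using inverse_cosh_mult_eps_le[OF \<nu>(1,2) \<alpha>(1) s \<kappa>] \<alpha>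
    by (intro mult_left_mono) (auto simp: M_def C_def R_def e_def w_def)
  also have "\<dots> = 8 powr \<alpha> * (8 * real n * w / (pi * (2 * \<alpha> - 1)))"
    using \<open>0 < w\<close> by (simp add: M_def flip: powr_add)
  also have "\<dots> \<le> 8 * (8 * real n * w / (pi * (2 * \<alpha> - 1)))"
    using powr_mono[of \<alpha> 1 8] \<alpha> \<open>0 < w\<close> by (intro mult_right_mono) auto
  finally have bound: "4 * 8 powr \<alpha> * K * w powr (1 - 2 * \<alpha>) / (\<alpha> * e * (2 * \<alpha> - 1))
                         \<le> 64 * real n * w / (pi * (2 * \<alpha> - 1))" by simp
  have "emeasure (mu_meas \<nu> \<alpha> n) (tail_region \<alpha> R e w)
          \<le> ennreal (4 * 8 powr \<alpha> * K * w powr (1 - 2 * \<alpha>) / (\<alpha> * e * (2 * \<alpha> - 1)))"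
    unfolding mu_meas_eq_density R_def[symmetric] C_def[symmetric] K_def[symmetric]
    using \<open>0 < R\<close> \<alpha> e \<open>0 < C\<close> \<open>phi R R \<le> w\<close> \<open>0 < w\<close> w
    by (intro emeasure_tail_region_le) (auto simp: K_def)
  then show ?thesis using bound unfolding R_def e_def by (auto intro: order_trans ennreal_leI)
qed

lemma measure_D_s_bounds:
  fixes \<nu> \<alpha> \<kappa> s :: real and n :: nat
  defines "w \<equiv> half_width \<nu> \<alpha> n \<kappa> s"
  assumes \<nu>: "0 < \<nu>" "\<nu> * exp 2 < real n" and \<alpha>: "1 / 2 < \<alpha>" "\<alpha> \<le> 1"
    and s: "0 < s" and \<kappa>: "1 \<le> \<kappa>" and w: "w \<le> pi / 2"
  shows "real n * w / pi \<le> measure (mu_meas \<nu> \<alpha> n) (D_s \<nu> \<alpha> n \<kappa> s)"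
    and "measure (mu_meas \<nu> \<alpha> n) (D_s \<nu> \<alpha> n \<kappa> s) \<le> (1 / pi + 64 / (pi * (2 * \<alpha> - 1))) * (real n * w)"
proof -
  define R A B where "R = hypR \<nu> n" and "A = {0..R} \<times> {-w..w}"
    and "B = tail_region \<alpha> R (eps \<alpha> \<kappa> s) w"
  have "\<nu> < \<nu> * exp 2" using \<nu> by simp
  then have n: "\<nu> < real n" "0 < n" using \<nu> by linarith+
  have R: "0 < R" using hypR_gt[of \<nu> 0 n] \<nu> n by (simp add: R_def)
  have "phi R R \<le> w" using \<kappa> by (simp add: w_def half_width_def R_def phi_s_def)
  moreover have "0 \<le> phi R R" using cos_phi(2)[OF R _ order.refl] R by simp
  ultimately have "0 \<le> w" "w < pi" using w pi_gt_zero by linarith+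
  note e = eps_bounds[OF less_imp_le[OF \<alpha>(1)] \<kappa> s]
  have D: "D_s \<nu> \<alpha> n \<kappa> s = A \<union> B"
    unfolding A_def B_def R_def w_def
    using R \<alpha> e \<open>phi R R \<le> w\<close> w by (intro D_s_eq_sector_Un_tail) (auto simp: R_def w_def)
  have "A \<in> sets (lborel \<Otimes>\<^sub>M lborel)" "B \<in> sets (lborel \<Otimes>\<^sub>M lborel)"
    unfolding A_def B_def by (intro pair_measureI; simp) (rule tail_region_sets)
  then have sets: "A \<in> sets (mu_meas \<nu> \<alpha> n)" "B \<in> sets (mu_meas \<nu> \<alpha> n)"
    unfolding mu_meas_eq_density sets_density lborel_prod .
  have A: "emeasure (mu_meas \<nu> \<alpha> n) A = ennreal (real n * w / pi)"
    unfolding A_def R_def using \<nu> n \<alpha> \<open>0 \<le> w\<close> \<open>w < pi\<close> by (intro emeasure_mu_meas_sector) auto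
  have B: "emeasure (mu_meas \<nu> \<alpha> n) B \<le> ennreal (64 * real n * w / (pi * (2 * \<alpha> - 1)))"
    unfolding B_def R_def w_def using assms by (intro emeasure_mu_meas_tail_le) (auto simp: w_def)
  have "emeasure (mu_meas \<nu> \<alpha> n) (D_s \<nu> \<alpha> n \<kappa> s)
          \<le> ennreal (real n * w / pi) + ennreal (64 * real n * w / (pi * (2 * \<alpha> - 1)))"
    unfolding D using emeasure_subadditive[OF sets] A B by (simp add: add_left_mono order_trans)
  also have "\<dots> = ennreal ((1 / pi + 64 / (pi * (2 * \<alpha> - 1))) * (real n * w))"
    using \<open>0 \<le> w\<close> \<alpha> by (subst ennreal_plus[symmetric]) (auto simp: field_simps)
  finally have upper: "emeasure (mu_meas \<nu> \<alpha> n) (D_s \<nu> \<alpha> n \<kappa> s) \<le> \<dots>" .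
  then show "measure (mu_meas \<nu> \<alpha> n) (D_s \<nu> \<alpha> n \<kappa> s) \<le> (1 / pi + 64 / (pi * (2 * \<alpha> - 1))) * (real n * w)"
    using \<open>0 \<le> w\<close> \<alpha> unfolding measure_def by (intro enn2real_leI) auto
  have "ennreal (real n * w / pi) \<le> emeasure (mu_meas \<nu> \<alpha> n) (D_s \<nu> \<alpha> n \<kappa> s)"
    unfolding A[symmetric] D using sets by (intro emeasure_mono) auto
  then have "enn2real (ennreal (real n * w / pi)) \<le> measure (mu_meas \<nu> \<alpha> n) (D_s \<nu> \<alpha> n \<kappa> s)"
    using upper unfolding measure_def by (intro enn2real_mono) (auto intro: le_less_trans)
  then show "real n * w / pi \<le> measure (mu_meas \<nu> \<alpha> n) (D_s \<nu> \<alpha> n \<kappa> s)"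
    using \<open>0 \<le> w\<close> by simp
qed

lemma bigthetaI_real:
  fixes f g :: "'a \<Rightarrow> real"
  assumes c: "0 < c\<^sub>1" "c\<^sub>1 < c\<^sub>2" and "eventually (\<lambda>x. c\<^sub>1 * g x \<le> f x \<and> f x \<le> c\<^sub>2 * g x) F"
  shows "f \<in> \<Theta>[F](g)"
proof (rule bigthetaI')
  show "eventually (\<lambda>x. c\<^sub>1 * norm (g x) \<le> norm (f x) \<and> norm (f x) \<le> c\<^sub>2 * norm (g x)) F"
    using assms(3)
  proof eventually_elim
    case (elim x)
    then have "0 \<le> (c\<^sub>2 - c\<^sub>1) * g x" by (simp add: algebra_simps)
    then have "0 \<le> g x" using c by (simp add: zero_le_mult_iff)
    moreover from this have "0 \<le> f x" using elim c by (meson mult_nonneg_nonneg less_imp_le order_trans)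
    ultimately show ?case using elim by simp
  qed
qed (use c in simp_all)

theorem mainTheorem8:
  fixes \<nu> \<alpha> :: real and \<kappa> s :: "nat \<Rightarrow> real"
  assumes "\<nu> > 0" and "1 / 2 < \<alpha>" and "\<alpha> \<le> 1"
    and "\<forall>n. s n > 0"
    and "eventually (\<lambda>n. \<kappa> n \<ge> 1) at_top"
    and "eventually (\<lambda>n. phi (hypR \<nu> n) (hypR \<nu> n) + \<kappa> n * phi_s \<alpha> (hypR \<nu> n) (s n) \<le> pi / 2) at_top"
  shows "(\<lambda>n. measure (mu_meas \<nu> \<alpha> n) (D_s \<nu> \<alpha> n (\<kappa> n) (s n)))
           \<in> \<Theta>(\<lambda>n. real n * (phi (hypR \<nu> n) (hypR \<nu> n) + \<kappa> n * phi_s \<alpha> (hypR \<nu> n) (s n))) \<and>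
         (\<lambda>n. measure (mu_meas \<nu> \<alpha> n) (D_s \<nu> \<alpha> n (\<kappa> n) (s n)))
           \<in> \<Theta>(\<lambda>n. 1 + \<kappa> n * s n powr (1 / (2 * \<alpha>)))"
proof -
  define c where "c = 1 / pi + 64 / (pi * (2 * \<alpha> - 1))"
  define F G H where "F n = measure (mu_meas \<nu> \<alpha> n) (D_s \<nu> \<alpha> n (\<kappa> n) (s n))"
    and "G n = real n * half_width \<nu> \<alpha> n (\<kappa> n) (s n)"
    and "H n = 1 + \<kappa> n * s n powr (1 / (2 * \<alpha>))" for n
  have large_n: "eventually (\<lambda>n. \<nu> * exp 2 < real n) at_top"
    by (rule eventually_compose_filterlim[OF eventually_gt_at_top filterlim_real_sequentially])
  have bounds: "eventually (\<lambda>n. (1 / pi * G n \<le> F n \<and> F n \<le> c * G n) \<and>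
                                 (\<nu> * H n \<le> G n \<and> G n \<le> 3 * \<nu> * H n)) at_top"
    using large_n assms(5,6)
  proof eventually_elim
    case (elim n)
    have "\<nu> < real n" using elim(1) assms(1) less_trans[of \<nu> "\<nu> * exp 2"] by simp
    then have "\<nu> * H n \<le> G n \<and> G n \<le> 3 * \<nu> * H n"
      using half_width_bounds[where n = n and \<kappa> = "\<kappa> n" and s = "s n" and \<alpha> = \<alpha>] assms(1,4) elim(2)
      by (simp add: G_def H_def field_simps)
    moreover have "1 / pi * G n \<le> F n \<and> F n \<le> c * G n"
      using measure_D_s_bounds[OF assms(1) elim(1) assms(2,3) assms(4)[rule_format] elim(2)] elim(3)
      by (simp add: F_def G_def c_def half_width_def)
    ultimately show ?case by blast
  qed
  have "1 / pi < c" using assms(2) by (simp add: c_def)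
  then have "F \<in> \<Theta>(G)" using bounds by (intro bigthetaI_real[of "1 / pi" c]) (auto elim: eventually_mono)
  moreover have "G \<in> \<Theta>(H)"
    using assms(1) bounds by (intro bigthetaI_real[of \<nu> "3 * \<nu>"]) (auto elim: eventually_mono)
  ultimately show ?thesis
    unfolding F_def G_def H_def half_width_def using landau_theta.bigtheta_trans1 by blast
qed

end
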